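(* Let $p\in\mathbb{N}_0$, let $n\ge p+1$ be an integer, let $\eta>0$ and write $x=\cosh\eta$. Then \[ \sum_{k=-p}^{p}\frac{(-1)^{k+1}e^{k\eta}R_p^k(x)}{n-k}=(-1)^{p+1}p!\,(n-p-1)!\,e^{n\eta}\sinh^p\eta\,P_p^{-n}(\coth\eta). \]
   Context: For $z>1$ and integers $p\ge0$, $n\ge1$, $P_p^{-n}(z)=\frac{1}{n!}\left(\frac{z-1}{z+1}\right)^{n/2}{}_2F_1\!\left(-p,p+1;1+n;\frac{1-z}{2}\right)$ (associated Legendre function of the first kind). The logarithmic polynomials $R_p^k(x)$, $p\in\mathbb{N}_0$, $k\in\mathbb{Z}$, are defined by $R_0^0(x)=1$, $R_0^k(x)=0$ for $k\ne0$, and $R_p^k(x)=\tfrac12 R_{p-1}^{k-1}(x)+xR_{p-1}^k(x)+\tfrac12 R_{p-1}^{k+1}(x)$ for $p\ge1$. *)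

theory Defs
  imports "HOL-Analysis.Analysis"
begin

definition hyp2F1 :: "real \<Rightarrow> real \<Rightarrow> real \<Rightarrow> real \<Rightarrow> real" where
  "hyp2F1 a b c w = (\<Sum>j. pochhammer a j * pochhammer b j / (pochhammer c j * fact j) * w ^ j)"

text \<open>Associated Legendre function P_p^{-n}(z) for z > 1.\<close>
definition legendreP_neg :: "nat \<Rightarrow> nat \<Rightarrow> real \<Rightarrow> real" where
  "legendreP_neg p n z = 1 / fact n * ((z - 1) / (z + 1)) powr (real n / 2)
      * hyp2F1 (- real p) (real p + 1) (1 + real n) ((1 - z) / 2)"

fun logR :: "nat \<Rightarrow> int \<Rightarrow> real \<Rightarrow> real" where
  "logR 0 k x = (if k = 0 then 1 else 0)"
| "logR (Suc p) k x = logR p (k - 1) x / 2 + x * logR p k x + logR p (k + 1) x / 2"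

end

theory Submission
  imports Defs
begin

text \<open>
  Since \<open>1/(n - k)\<close> is the integral of \<open>s^(n-1-k)\<close> over \<open>[0, 1]\<close>, the left-hand side is the
  integral of a polynomial. With \<open>q = exp \<eta>\<close>, so that \<open>cosh \<eta> = (q + 1/q)/2\<close>, the generating
  function \<open>\<Sum>\<^sub>k R_p^k(x) t^k = (x + (t + 1/t)/2)^p\<close> evaluated at \<open>t = -q/s\<close> collapses that
  polynomial to \<open>-s^(n-1-p) (1 - s)^p (s - q^2)^p / (2q)^p\<close>. Expanding \<open>(s - q^2)^p\<close> in powers
  of \<open>1 - s\<close> leaves Beta integrals, and the resulting finite sum is the terminating series
  \<open>2F1(-p, p + 1; n + 1; 1/(1 - q^2))\<close> that defines \<open>P_p^{-n}(coth \<eta>)\<close>.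
\<close>

lemma has_integral_power_mult_power_one_minus:
  "((\<lambda>t::real. t ^ a * (1 - t) ^ b) has_integral fact a * fact b / fact (a + b + 1)) {0..1}"
proof -
  have "((\<lambda>t. t powr (real (a + 1) - 1) * (1 - t) powr (real (b + 1) - 1))
          has_integral Beta (real (a + 1)) (real (b + 1))) {0..1}"
    by (rule has_integral_Beta_real) auto
  then have "((\<lambda>t. t powr (real (a + 1) - 1) * (1 - t) powr (real (b + 1) - 1))
          has_integral Beta (real (a + 1)) (real (b + 1))) {0<..<1}"
    by (simp add: has_integral_Icc_iff_Ioo)
  then have "((\<lambda>t::real. t ^ a * (1 - t) ^ b) has_integral Beta (real (a + 1)) (real (b + 1))) {0<..<1}"
    by (rule has_integral_cong[THEN iffD1, rotated]) (simp add: powr_realpow)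
  moreover have "Beta (real (a + 1)) (real (b + 1)) = fact a * fact b / fact (a + b + 1)"
    using Gamma_fact[of a, where 'a=real] Gamma_fact[of b, where 'a=real]
      Gamma_fact[of "a + b + 1", where 'a=real]
    by (simp add: Beta_def add_ac)
  ultimately show ?thesis
    by (simp add: has_integral_Icc_iff_Ioo)
qed

lemma has_integral_power_01: "((\<lambda>t::real. t ^ a) has_integral 1 / (real a + 1)) {0..1}"
  using has_integral_power_mult_power_one_minus[of a 0] by (simp add: add.commute)

lemma logR_eq_0: "int p < \<bar>k\<bar> \<Longrightarrow> logR p k x = 0"
  by (induction p arbitrary: k) auto

lemma sum_logR_mono_neutral:
  assumes "finite A" "{-int p..int p} \<subseteq> A"
  shows "(\<Sum>k\<in>A. logR p k x * f k) = (\<Sum>k\<in>{-int p..int p}. logR p k x * f k)"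
  by (rule sum.mono_neutral_right[OF assms]) (auto intro!: logR_eq_0)

lemma sum_logR_shift:
  "(\<Sum>k\<in>{-int (Suc p)..int (Suc p)}. logR p (k + c) x * f (k + c))
     = (\<Sum>k\<in>{-int p..int p}. logR p k x * f k)" if "\<bar>c\<bar> \<le> 1"
proof -
  have "(\<Sum>k\<in>{-int (Suc p)..int (Suc p)}. logR p (k + c) x * f (k + c))
      = (\<Sum>k\<in>(\<lambda>k. k + c) ` {-int (Suc p)..int (Suc p)}. logR p k x * f k)"
    by (subst sum.reindex) (auto simp: inj_on_def simp del: image_add_atLeastAtMost')
  also have "\<dots> = (\<Sum>k\<in>{-int p..int p}. logR p k x * f k)"
    using that by (intro sum_logR_mono_neutral) auto
  finally show ?thesis .
qed

lemma logR_generating_function: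
  fixes t x :: real
  assumes "t \<noteq> 0"
  shows "(\<Sum>k\<in>{-int p..int p}. logR p k x * t powi k) = (x + (t + 1 / t) / 2) ^ p"
proof (induction p)
  case (Suc p)
  let ?G = "\<Sum>k\<in>{-int p..int p}. logR p k x * t powi k"
  let ?I = "{-int (Suc p)..int (Suc p)}"
  have "(\<Sum>k\<in>?I. logR p (k - 1) x * t powi k) = (\<Sum>k\<in>?I. logR p (k + -1) x * (t * t powi (k + -1)))"
    using assms by (intro sum.cong) (auto simp: power_int_diff)
  also have "\<dots> = t * ?G"
    by (subst sum_logR_shift[where f = "\<lambda>k. t * t powi k"]) (auto simp: sum_distrib_left ac_simps)
  finally have left: "(\<Sum>k\<in>?I. logR p (k - 1) x * t powi k) = t * ?G" .
  have "(\<Sum>k\<in>?I. logR p (k + 1) x * t powi k) = (\<Sum>k\<in>?I. logR p (k + 1) x * (t powi (k + 1) / t))"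
    using assms by (intro sum.cong) (auto simp: power_int_add)
  also have "\<dots> = ?G / t"
    by (subst sum_logR_shift[where f = "\<lambda>k. t powi k / t"]) (auto simp: sum_divide_distrib)
  finally have right: "(\<Sum>k\<in>?I. logR p (k + 1) x * t powi k) = ?G / t" .
  have centre: "(\<Sum>k\<in>?I. logR p k x * t powi k) = ?G"
    by (rule sum_logR_mono_neutral) auto
  have "(\<Sum>k\<in>?I. logR (Suc p) k x * t powi k)
      = (\<Sum>k\<in>?I. logR p (k - 1) x * t powi k) / 2 + x * (\<Sum>k\<in>?I. logR p k x * t powi k)
        + (\<Sum>k\<in>?I. logR p (k + 1) x * t powi k) / 2"
    by (simp add: sum.distrib sum_divide_distrib sum_distrib_left algebra_simps)
  also have "\<dots> = (x + (t + 1 / t) / 2) * ?G"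
    unfolding left right centre by (simp add: algebra_simps)
  finally show ?case
    using Suc.IH by simp
qed simp

lemma sum_logR_monomials:
  fixes q s :: real
  assumes "q \<noteq> 0" "s \<noteq> 0" "p < n"
  shows "(\<Sum>k\<in>{-int p..int p}. (-1) powi (k + 1) * q powi k * logR p k ((q + 1 / q) / 2)
            * s ^ nat (int n - 1 - k))
       = - (s ^ (n - 1 - p) * (1 - s) ^ p * (s - q\<^sup>2) ^ p) / (2 * q) ^ p"
proof -
  define x where "x = (q + 1 / q) / 2"
  define t where "t = - q / s"
  have "t \<noteq> 0"
    using assms by (simp add: t_def)
  have monomial: "(-1) powi (k + 1) * q powi k * logR p k x * s ^ nat (int n - 1 - k)
      = - (s ^ (n - 1)) * (logR p k x * t powi k)" if "k \<in> {-int p..int p}" for k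
  proof -
    have "s ^ nat (int n - 1 - k) = s powi (int (n - 1) - k)"
      using that assms by (simp add: power_int_of_nat[symmetric])
    also have "\<dots> = s ^ (n - 1) / s powi k"
      using assms by (subst power_int_diff) (auto simp del: of_nat_diff)
    finally have pow_s: "s ^ nat (int n - 1 - k) = s ^ (n - 1) / s powi k" .
    have pow_t: "t powi k = (-1) powi k * q powi k / s powi k"
    proof -
      have "t = (-1) * q / s"
        by (simp add: t_def)
      then show ?thesis
        by (simp only: power_int_divide_distrib power_int_mult_distrib)
    qed
    have sign: "(-1::real) powi (k + 1) = - ((-1) powi k)"
      by (simp add: power_int_add)
    show ?thesis
      unfolding pow_s pow_t sign using assms by (simp add: field_simps)
  qed
  have "x + (t + 1 / t) / 2 = (1 - s) * (s - q\<^sup>2) / (2 * q * s)"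
    using assms by (simp add: x_def t_def field_simps power2_eq_square)
  moreover have "s ^ (n - 1) = s ^ (n - 1 - p) * s ^ p"
    using assms by (simp flip: power_add)
  ultimately have factored: "- (s ^ (n - 1)) * (x + (t + 1 / t) / 2) ^ p
      = - (s ^ (n - 1 - p) * (1 - s) ^ p * (s - q\<^sup>2) ^ p) / (2 * q) ^ p"
    using assms by (simp add: power_divide power_mult_distrib)
  have "(\<Sum>k\<in>{-int p..int p}. (-1) powi (k + 1) * q powi k * logR p k x * s ^ nat (int n - 1 - k))
      = - (s ^ (n - 1)) * (\<Sum>k\<in>{-int p..int p}. logR p k x * t powi k)"
    by (simp add: monomial sum_distrib_left)
  also have "\<dots> = - (s ^ (n - 1 - p) * (1 - s) ^ p * (s - q\<^sup>2) ^ p) / (2 * q) ^ p"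
    by (simp only: logR_generating_function[OF \<open>t \<noteq> 0\<close>] factored)
  finally show ?thesis
    by (simp only: x_def)
qed

lemma has_integral_sum_logR:
  fixes q :: real
  assumes "q \<noteq> 0" "p < n"
  shows "((\<lambda>s. - (s ^ (n - 1 - p) * (1 - s) ^ p * (s - q\<^sup>2) ^ p) / (2 * q) ^ p) has_integral
           (\<Sum>k\<in>{-int p..int p}. (-1) powi (k + 1) * q powi k * logR p k ((q + 1 / q) / 2)
              / (real n - of_int k))) {0..1}"
proof -
  let ?c = "\<lambda>k. (-1) powi (k + 1) * q powi k * logR p k ((q + 1 / q) / 2)"
  have sum_integral: "((\<lambda>s. \<Sum>k\<in>{-int p..int p}. ?c k * s ^ nat (int n - 1 - k)) has_integral
          (\<Sum>k\<in>{-int p..int p}. ?c k / (real n - of_int k))) {0..1}"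
  proof (intro has_integral_sum)
    fix k assume "k \<in> {-int p..int p}"
    then have "real (nat (int n - 1 - k)) + 1 = real n - of_int k"
      using assms by auto
    then show "((\<lambda>s. ?c k * s ^ nat (int n - 1 - k)) has_integral ?c k / (real n - of_int k)) {0..1}"
      using has_integral_mult_right[OF has_integral_power_01[of "nat (int n - 1 - k)"], of "?c k"]
      by (simp only: times_divide_eq_right mult_1_right)
  qed simp
  show ?thesis
  proof (rule has_integral_spike_finite[OF _ _ sum_integral])
    fix s :: real assume "s \<in> {0..1} - {0}"
    with assms show "- (s ^ (n - 1 - p) * (1 - s) ^ p * (s - q\<^sup>2) ^ p) / (2 * q) ^ p
        = (\<Sum>k\<in>{-int p..int p}. ?c k * s ^ nat (int n - 1 - k))"
      by (intro sum_logR_monomials[symmetric]) auto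
  qed (rule finite.emptyI[THEN finite.insertI])
qed

lemma has_integral_power_binomial:
  fixes a :: real
  shows "((\<lambda>s. s ^ m * (1 - s) ^ p * (s - a) ^ p) has_integral
           (\<Sum>j\<le>p. real (p choose j) * (-1) ^ j * (1 - a) ^ (p - j)
              * (fact m * fact (p + j) / fact (m + p + j + 1)))) {0..1}"
proof -
  have binomial: "x * y ^ p * (- y + b) ^ p
      = (\<Sum>j\<le>p. real (p choose j) * (-1) ^ j * b ^ (p - j) * (x * y ^ (p + j)))" for x y b :: real
  proof -
    have expansion: "(- y + b) ^ p = (\<Sum>j\<le>p. real (p choose j) * (- y) ^ j * b ^ (p - j))"
      by (rule binomial_ring)
    show ?thesis
      unfolding expansion sum_distrib_left
      \<comment> \<open>\<open>power_minus\<close> must be instantiated: unrestricted, it rewrites \<open>(-1)^j\<close> forever\<close>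
      by (intro sum.cong refl) (simp only: power_minus[of y] power_add mult_ac)
  qed
  have expand: "s ^ m * (1 - s) ^ p * (s - a) ^ p
      = (\<Sum>j\<le>p. real (p choose j) * (-1) ^ j * (1 - a) ^ (p - j) * (s ^ m * (1 - s) ^ (p + j)))"
    for s :: real
    using binomial[of "s ^ m" "1 - s" "1 - a"] by simp
  show ?thesis
    unfolding expand
  proof (intro has_integral_sum has_integral_mult_right)
    fix j
    show "((\<lambda>s::real. s ^ m * (1 - s) ^ (p + j)) has_integral fact m * fact (p + j) / fact (m + p + j + 1)) {0..1}"
      using has_integral_power_mult_power_one_minus[of m "p + j"] by (simp only: add.assoc)
  qed simp
qed

lemma sum_logR_eq_beta_sum:
  fixes q :: real
  assumes "q \<noteq> 0" "p < n"
  shows "(\<Sum>k\<in>{-int p..int p}. (-1) powi (k + 1) * q powi k * logR p k ((q + 1 / q) / 2)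
            / (real n - of_int k))
       = - (\<Sum>j\<le>p. real (p choose j) * (-1) ^ j * (1 - q\<^sup>2) ^ (p - j)
              * (fact (n - p - 1) * fact (p + j) / fact (n + j))) / (2 * q) ^ p"
proof -
  have "n - 1 - p + p + j + 1 = n + j" for j
    using assms by simp
  then have "((\<lambda>s. - (s ^ (n - 1 - p) * (1 - s) ^ p * (s - q\<^sup>2) ^ p) / (2 * q) ^ p) has_integral
      - (\<Sum>j\<le>p. real (p choose j) * (-1) ^ j * (1 - q\<^sup>2) ^ (p - j)
              * (fact (n - p - 1) * fact (p + j) / fact (n + j))) / (2 * q) ^ p) {0..1}"
    using has_integral_mult_right[OF has_integral_power_binomial[of "n - 1 - p" p "q\<^sup>2"],
        of "- 1 / (2 * q) ^ p"]
    by simp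
  then show ?thesis
    using has_integral_sum_logR[OF assms] by (rule has_integral_unique[rotated])
qed

lemma pochhammer_of_nat_plus_1:
  "pochhammer (of_nat a + 1) j = (fact (a + j) / fact a :: 'a::field_char_0)"
proof -
  have "fact (a + j) = (pochhammer 1 a * pochhammer (1 + of_nat a) j :: 'a)"
    by (simp add: pochhammer_fact pochhammer_product')
  then show ?thesis
    by (simp add: pochhammer_fact[symmetric] add.commute)
qed

lemma pochhammer_minus_of_nat:
  assumes "j \<le> p"
  shows "pochhammer (- of_nat p) j = ((-1) ^ j * fact p / fact (p - j) :: 'a::field_char_0)"
proof -
  have "pochhammer (- of_nat p) j = (-1) ^ j * pochhammer (of_nat p - of_nat j + 1 :: 'a) j"
    by (rule pochhammer_minus)
  also have "of_nat p - of_nat j + 1 = (of_nat (p - j) + 1 :: 'a)"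
    using assms by simp
  also have "pochhammer (of_nat (p - j) + 1) j = (fact (p - j + j) / fact (p - j) :: 'a)"
    by (rule pochhammer_of_nat_plus_1)
  finally show ?thesis
    using assms by simp
qed

lemma hyp2F1_minus_of_nat:
  "hyp2F1 (- real p) b c w
     = (\<Sum>j\<le>p. pochhammer (- real p) j * pochhammer b j / (pochhammer c j * fact j) * w ^ j)"
  unfolding hyp2F1_def by (rule suminf_finite) (auto simp: pochhammer_of_nat_eq_0_lemma)

lemma hyp2F1_legendre:
  "hyp2F1 (- real p) (real p + 1) (1 + real n) w
     = (\<Sum>j\<le>p. (-1) ^ j * real (p choose j) * fact (p + j) * fact n / (fact p * fact (n + j)) * w ^ j)"
  unfolding hyp2F1_minus_of_nat
proof (rule sum.cong[OF refl])
  fix j assume "j \<in> {..p}"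
  then have "j \<le> p" by simp
  have poch_n: "pochhammer (1 + real n) j = fact (n + j) / fact n"
    using pochhammer_of_nat_plus_1[of n j] by (simp add: add.commute)
  have poch_p: "pochhammer (real p + 1) j = fact (p + j) / fact p"
    by (rule pochhammer_of_nat_plus_1)
  show "pochhammer (- real p) j * pochhammer (real p + 1) j
      / (pochhammer (1 + real n) j * fact j) * w ^ j
      = (-1) ^ j * real (p choose j) * fact (p + j) * fact n / (fact p * fact (n + j)) * w ^ j"
    unfolding poch_n poch_p pochhammer_minus_of_nat[OF \<open>j \<le> p\<close>] binomial_fact[OF \<open>j \<le> p\<close>]
    by (simp add: field_simps)
qed

lemma legendreP_neg_exp:
  fixes q :: real
  assumes "q > 1"
  shows "legendreP_neg p n ((q\<^sup>2 + 1) / (q\<^sup>2 - 1))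
       = (1 / q) ^ n / fact n * hyp2F1 (- real p) (real p + 1) (1 + real n) (1 / (1 - q\<^sup>2))"
proof -
  have "1 < q * q"
    using less_1_mult[OF assms assms] .
  then have ratio: "((q\<^sup>2 + 1) / (q\<^sup>2 - 1) - 1) / ((q\<^sup>2 + 1) / (q\<^sup>2 - 1) + 1) = (1 / q)\<^sup>2"
    and argument: "(1 - (q\<^sup>2 + 1) / (q\<^sup>2 - 1)) / 2 = 1 / (1 - q\<^sup>2)"
    using assms by (simp_all add: field_simps power2_eq_square)
  have "(1 / q)\<^sup>2 = (1 / q) powr 2"
    using assms by simp
  then have "((1 / q)\<^sup>2) powr (real n / 2) = (1 / q) powr real n"
    by (simp add: powr_powr)
  also have "\<dots> = (1 / q) ^ n"
    using assms by (simp add: powr_realpow)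
  finally have power: "((1 / q)\<^sup>2) powr (real n / 2) = (1 / q) ^ n" .
  show ?thesis
    unfolding legendreP_neg_def ratio argument power by simp
qed

lemma scaled_legendreP_neg_exp:
  fixes q :: real
  assumes "q > 1"
  shows "(-1) ^ (p + 1) * fact p * fact (n - p - 1) * q ^ n * ((q\<^sup>2 - 1) / (2 * q)) ^ p
           * legendreP_neg p n ((q\<^sup>2 + 1) / (q\<^sup>2 - 1))
       = - (\<Sum>j\<le>p. real (p choose j) * (-1) ^ j * (1 - q\<^sup>2) ^ (p - j)
              * (fact (n - p - 1) * fact (p + j) / fact (n + j))) / (2 * q) ^ p"
proof -
  define u where "u = 1 - q\<^sup>2"
  have "u \<noteq> 0" "q \<noteq> 0"
    using less_1_mult[OF assms assms] assms by (auto simp: u_def power2_eq_square)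
  have "(-1) ^ (p + 1) * fact p * fact (n - p - 1) * q ^ n * (- u / (2 * q)) ^ p
          * ((1 / q) ^ n / fact n
             * ((-1) ^ j * real (p choose j) * fact (p + j) * fact n / (fact p * fact (n + j)) * (1 / u) ^ j))
      = - (real (p choose j) * (-1) ^ j * u ^ (p - j) * (fact (n - p - 1) * fact (p + j) / fact (n + j)))
          / (2 * q) ^ p" if "j \<le> p" for j
  proof -
    have "u ^ p = u ^ (p - j) * u ^ j"
      using that by (simp flip: power_add)
    then have power_split: "(- u / (2 * q)) ^ p = (-1) ^ p * (u ^ (p - j) * u ^ j) / (2 * q) ^ p"
      by (simp only: power_divide power_minus[of u])
    moreover have "q ^ n * (1 / q) ^ n = 1"
      using \<open>q \<noteq> 0\<close> by (simp add: power_one_over)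
    moreover have "(-1) ^ (p + 1) * (-1) ^ p = (-1 :: real)"
      by (simp flip: power_add)
    ultimately show ?thesis
      unfolding power_split using \<open>u \<noteq> 0\<close> \<open>q \<noteq> 0\<close> by (simp add: field_simps)
  qed
  then show ?thesis
    unfolding legendreP_neg_exp[OF assms] hyp2F1_legendre sum_distrib_left sum_divide_distrib
      sum_negf[symmetric]
    by (intro sum.cong) (simp_all add: u_def mult.assoc)
qed

theorem mainTheorem5:
  fixes p n :: nat and \<eta> :: real
  assumes "n \<ge> p + 1" and "\<eta> > 0"
  shows "(\<Sum>k\<in>{-int p..int p}. (-1) powi (k + 1) * exp (of_int k * \<eta>) * logR p k (cosh \<eta>)
            / (real n - of_int k))
       = (-1) ^ (p + 1) * fact p * fact (n - p - 1) * exp (real n * \<eta>) * sinh \<eta> ^ p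
            * legendreP_neg p n (cosh \<eta> / sinh \<eta>)"
proof -
  define q where "q = exp \<eta>"
  have "q > 1" "p < n"
    using assms by (simp_all add: q_def)
  have cosh: "cosh \<eta> = (q + 1 / q) / 2" and sinh: "sinh \<eta> = (q\<^sup>2 - 1) / (2 * q)"
    by (simp_all add: cosh_def sinh_def q_def exp_minus field_simps power2_eq_square)
  have coth: "cosh \<eta> / sinh \<eta> = (q\<^sup>2 + 1) / (q\<^sup>2 - 1)"
    unfolding cosh sinh using \<open>q > 1\<close> less_1_mult[OF \<open>q > 1\<close> \<open>q > 1\<close>]
    by (simp add: field_simps power2_eq_square)
  have "(\<Sum>k\<in>{-int p..int p}. (-1) powi (k + 1) * exp (of_int k * \<eta>) * logR p k (cosh \<eta>)
            / (real n - of_int k))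
      = (\<Sum>k\<in>{-int p..int p}. (-1) powi (k + 1) * q powi k * logR p k ((q + 1 / q) / 2)
            / (real n - of_int k))"
    by (simp only: cosh q_def exp_power_int)
  also have "\<dots> = (-1) ^ (p + 1) * fact p * fact (n - p - 1) * q ^ n * ((q\<^sup>2 - 1) / (2 * q)) ^ p
           * legendreP_neg p n ((q\<^sup>2 + 1) / (q\<^sup>2 - 1))"
    using \<open>q > 1\<close> \<open>p < n\<close> by (simp only: sum_logR_eq_beta_sum scaled_legendreP_neg_exp)
  also have "\<dots> = (-1) ^ (p + 1) * fact p * fact (n - p - 1) * exp (real n * \<eta>) * sinh \<eta> ^ p
            * legendreP_neg p n (cosh \<eta> / sinh \<eta>)"
    unfolding coth unfolding sinh by (simp only: q_def exp_of_nat_mult)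
  finally show ?thesis .
qed

end
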